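(* Let $R$ be a ring and $M$ a left $R$-module which satisfies the complete radical formula. Then the following statements are equivalent: (1) $M$ is completely semiprime; (2) $\langle E_M(0)\rangle = 0$; (3) $\beta_{co}(M)=0$; (4) $M$ is a subdirect product of completely prime modules.
   Context: Rings are associative with identity; modules are unital left modules. A submodule $P$ of $M$ is completely prime if $RM\not\subseteq P$ and for all $r\in R$, $m\in M$, $rm\in P$ implies $m\in P$ or $rM\subseteq P$. A proper submodule $P$ is completely semiprime if $RM\not\subseteq P$ and for all $a\in R$, $m\in M$, $a^2m\in P$ implies $am\in P$. A module is completely prime (resp. completely semiprime) if its zero submodule is completely prime (resp. completely semiprime). For a submodule $N$ of $M$, $\beta^s_{co}(N)$ is the intersection of all completely prime submodules of $M$ containing $N$ (equal to $M$ if there are none), and $\beta_{co}(M)=\beta^s_{co}(0)$. The envelope of $N$ is $E_M(N)=\{rm : r\in R, m\in M, r^km\in N \text{ for some } k\in\mathbb N\}$, and $\langle E_M(N)\rangle$ is the submodule of $M$ generated by it. A submodule $N$ satisfies the complete radical formula if $\langle E_M(N)\rangle=\beta^s_{co}(N)$; a module satisfies the complete radical formula if all its submodules do. $M$ is a subdirect product of modules $S_\lambda$ ($\lambda\in\Lambda$) if there is an injective homomorphism $\sigma:M\to\prod_\lambda S_\lambda$ such that $\pi_\lambda\circ\sigma$ is surjective for every canonical projection $\pi_\lambda$. *)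

theory Defs
  imports "HOL-Algebra.Module" "HOL-Library.FuncSet"
begin

text \<open>Left unital modules over a (not necessarily commutative) ring with identity.
  We reuse the HOL-Algebra record type of modules, but not the locale module
  (which requires a commutative ring).\<close>

definition left_module :: "('r, 'x) ring_scheme \<Rightarrow> ('r, 'm, 'y) module_scheme \<Rightarrow> bool" where
  "left_module R M \<longleftrightarrow> ring R \<and> abelian_group M \<and>
     (\<forall>a \<in> carrier R. \<forall>x \<in> carrier M. a \<odot>\<^bsub>M\<^esub> x \<in> carrier M) \<and>
     (\<forall>a \<in> carrier R. \<forall>b \<in> carrier R. \<forall>x \<in> carrier M.
        (a \<oplus>\<^bsub>R\<^esub> b) \<odot>\<^bsub>M\<^esub> x = a \<odot>\<^bsub>M\<^esub> x \<oplus>\<^bsub>M\<^esub> b \<odot>\<^bsub>M\<^esub> x) \<and>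
     (\<forall>a \<in> carrier R. \<forall>x \<in> carrier M. \<forall>y \<in> carrier M.
        a \<odot>\<^bsub>M\<^esub> (x \<oplus>\<^bsub>M\<^esub> y) = a \<odot>\<^bsub>M\<^esub> x \<oplus>\<^bsub>M\<^esub> a \<odot>\<^bsub>M\<^esub> y) \<and>
     (\<forall>a \<in> carrier R. \<forall>b \<in> carrier R. \<forall>x \<in> carrier M.
        (a \<otimes>\<^bsub>R\<^esub> b) \<odot>\<^bsub>M\<^esub> x = a \<odot>\<^bsub>M\<^esub> (b \<odot>\<^bsub>M\<^esub> x)) \<and>
     (\<forall>x \<in> carrier M. \<one>\<^bsub>R\<^esub> \<odot>\<^bsub>M\<^esub> x = x)"

definition submod :: "('r, 'x) ring_scheme \<Rightarrow> ('r, 'm, 'y) module_scheme \<Rightarrow> 'm set \<Rightarrow> bool" where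
  "submod R M N \<longleftrightarrow> N \<subseteq> carrier M \<and> \<zero>\<^bsub>M\<^esub> \<in> N \<and>
     (\<forall>x \<in> N. \<forall>y \<in> N. x \<oplus>\<^bsub>M\<^esub> y \<in> N) \<and>
     (\<forall>x \<in> N. \<ominus>\<^bsub>M\<^esub> x \<in> N) \<and>
     (\<forall>a \<in> carrier R. \<forall>x \<in> N. a \<odot>\<^bsub>M\<^esub> x \<in> N)"

definition RM :: "('r, 'x) ring_scheme \<Rightarrow> ('r, 'm, 'y) module_scheme \<Rightarrow> 'm set" where
  "RM R M = {a \<odot>\<^bsub>M\<^esub> m | a m. a \<in> carrier R \<and> m \<in> carrier M}"

definition gen_submod :: "('r, 'x) ring_scheme \<Rightarrow> ('r, 'm, 'y) module_scheme \<Rightarrow> 'm set \<Rightarrow> 'm set" where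
  "gen_submod R M S = \<Inter>{N. submod R M N \<and> S \<subseteq> N}"

definition completely_prime_submod :: "('r, 'x) ring_scheme \<Rightarrow> ('r, 'm, 'y) module_scheme \<Rightarrow> 'm set \<Rightarrow> bool" where
  "completely_prime_submod R M P \<longleftrightarrow> submod R M P \<and> \<not> RM R M \<subseteq> P \<and>
     (\<forall>r \<in> carrier R. \<forall>m \<in> carrier M. r \<odot>\<^bsub>M\<^esub> m \<in> P \<longrightarrow>
        m \<in> P \<or> (\<forall>m' \<in> carrier M. r \<odot>\<^bsub>M\<^esub> m' \<in> P))"

definition completely_semiprime_submod :: "('r, 'x) ring_scheme \<Rightarrow> ('r, 'm, 'y) module_scheme \<Rightarrow> 'm set \<Rightarrow> bool" where
  "completely_semiprime_submod R M P \<longleftrightarrow> submod R M P \<and> P \<noteq> carrier M \<and> \<not> RM R M \<subseteq> P \<and>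
     (\<forall>a \<in> carrier R. \<forall>m \<in> carrier M. (a \<otimes>\<^bsub>R\<^esub> a) \<odot>\<^bsub>M\<^esub> m \<in> P \<longrightarrow> a \<odot>\<^bsub>M\<^esub> m \<in> P)"

definition completely_prime_module :: "('r, 'x) ring_scheme \<Rightarrow> ('r, 'm, 'y) module_scheme \<Rightarrow> bool" where
  "completely_prime_module R M \<longleftrightarrow> completely_prime_submod R M {\<zero>\<^bsub>M\<^esub>}"

definition completely_semiprime_module :: "('r, 'x) ring_scheme \<Rightarrow> ('r, 'm, 'y) module_scheme \<Rightarrow> bool" where
  "completely_semiprime_module R M \<longleftrightarrow> completely_semiprime_submod R M {\<zero>\<^bsub>M\<^esub>}"

definition beta_s_co :: "('r, 'x) ring_scheme \<Rightarrow> ('r, 'm, 'y) module_scheme \<Rightarrow> 'm set \<Rightarrow> 'm set" where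
  "beta_s_co R M N =
     (if \<exists>P. completely_prime_submod R M P \<and> N \<subseteq> P
      then \<Inter>{P. completely_prime_submod R M P \<and> N \<subseteq> P}
      else carrier M)"

definition beta_co :: "('r, 'x) ring_scheme \<Rightarrow> ('r, 'm, 'y) module_scheme \<Rightarrow> 'm set" where
  "beta_co R M = beta_s_co R M {\<zero>\<^bsub>M\<^esub>}"

definition envelope :: "('r, 'x) ring_scheme \<Rightarrow> ('r, 'm, 'y) module_scheme \<Rightarrow> 'm set \<Rightarrow> 'm set" where
  "envelope R M N = {r \<odot>\<^bsub>M\<^esub> m | r m. r \<in> carrier R \<and> m \<in> carrier M \<and>
      (\<exists>k::nat. k \<ge> 1 \<and> (r [^]\<^bsub>R\<^esub> k) \<odot>\<^bsub>M\<^esub> m \<in> N)}"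

definition complete_radical_formula_submod :: "('r, 'x) ring_scheme \<Rightarrow> ('r, 'm, 'y) module_scheme \<Rightarrow> 'm set \<Rightarrow> bool" where
  "complete_radical_formula_submod R M N \<longleftrightarrow> gen_submod R M (envelope R M N) = beta_s_co R M N"

definition complete_radical_formula :: "('r, 'x) ring_scheme \<Rightarrow> ('r, 'm, 'y) module_scheme \<Rightarrow> bool" where
  "complete_radical_formula R M \<longleftrightarrow>
     (\<forall>N. submod R M N \<longrightarrow> complete_radical_formula_submod R M N)"

definition module_hom :: "('r, 'x) ring_scheme \<Rightarrow> ('r, 'm, 'y) module_scheme \<Rightarrow> ('r, 'n, 'z) module_scheme \<Rightarrow> ('m \<Rightarrow> 'n) set" where
  "module_hom R M N = {h. h \<in> carrier M \<rightarrow> carrier N \<and>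
     (\<forall>x \<in> carrier M. \<forall>y \<in> carrier M. h (x \<oplus>\<^bsub>M\<^esub> y) = h x \<oplus>\<^bsub>N\<^esub> h y) \<and>
     (\<forall>a \<in> carrier R. \<forall>x \<in> carrier M. h (a \<odot>\<^bsub>M\<^esub> x) = a \<odot>\<^bsub>N\<^esub> h x)}"

definition prod_module :: "'i set \<Rightarrow> ('i \<Rightarrow> ('r, 's) module) \<Rightarrow> ('r, 'i \<Rightarrow> 's) module" where
  "prod_module I S =
     \<lparr> carrier = PiE I (\<lambda>i. carrier (S i)),
       monoid.mult = (\<lambda>f g. \<lambda>i\<in>I. f i \<otimes>\<^bsub>S i\<^esub> g i),
       one = (\<lambda>i\<in>I. \<one>\<^bsub>S i\<^esub>),
       zero = (\<lambda>i\<in>I. \<zero>\<^bsub>S i\<^esub>),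
       add = (\<lambda>f g. \<lambda>i\<in>I. f i \<oplus>\<^bsub>S i\<^esub> g i),
       smult = (\<lambda>a f. \<lambda>i\<in>I. a \<odot>\<^bsub>S i\<^esub> f i) \<rparr>"

definition subdirect_product_of_completely_prime ::
  "('r, 'x) ring_scheme \<Rightarrow> ('r, 'm, 'y) module_scheme \<Rightarrow> 'i set \<Rightarrow> ('i \<Rightarrow> ('r, 's) module) \<Rightarrow> bool" where
  "subdirect_product_of_completely_prime R M I S \<longleftrightarrow>
     (\<forall>i \<in> I. left_module R (S i) \<and> completely_prime_module R (S i)) \<and>
     (\<exists>\<sigma>. \<sigma> \<in> module_hom R M (prod_module I S) \<and> inj_on \<sigma> (carrier M) \<and>
        (\<forall>i \<in> I. (\<lambda>m. \<sigma> m i) ` carrier M = carrier (S i)))"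

end

theory Submission
  imports Defs "HOL-Algebra.AbelCoset"
begin

text \<open>For a left module the completely semiprime condition ((aa)m = 0 implies am = 0) is
  equivalent to every nilpotency relation a^k m = 0 collapsing to a m = 0, i.e. to the envelope
  of 0 being 0, and hence to the submodule it generates being 0.  The complete radical formula
  identifies that submodule with \<beta>_co(M).  When \<beta>_co(M) = 0, the quotients M/P by the completely
  prime submodules P are completely prime modules and m \<mapsto> (P + m)_P embeds M subdirectly into
  their product.  Conversely a completely prime module is completely semiprime, and the squaring
  condition is inherited by submodules of products, hence by subdirect products.\<close>

locale lmodule =
  fixes R :: "('r, 'x) ring_scheme" and M :: "('r, 'm, 'y) module_scheme"
  assumes left_module: "left_module R M"
begin

sublocale R: ring R
  using left_module by (simp add: left_module_def)

sublocale M: abelian_group M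
  using left_module by (simp add: left_module_def)

lemma smult_closed [intro, simp]:
  "\<lbrakk>a \<in> carrier R; x \<in> carrier M\<rbrakk> \<Longrightarrow> a \<odot>\<^bsub>M\<^esub> x \<in> carrier M"
  using left_module by (simp add: left_module_def)

lemma smult_l_distr:
  "\<lbrakk>a \<in> carrier R; b \<in> carrier R; x \<in> carrier M\<rbrakk> \<Longrightarrow>
    (a \<oplus>\<^bsub>R\<^esub> b) \<odot>\<^bsub>M\<^esub> x = a \<odot>\<^bsub>M\<^esub> x \<oplus>\<^bsub>M\<^esub> b \<odot>\<^bsub>M\<^esub> x"
  using left_module by (simp add: left_module_def)

lemma smult_r_distr:
  "\<lbrakk>a \<in> carrier R; x \<in> carrier M; y \<in> carrier M\<rbrakk> \<Longrightarrow>
    a \<odot>\<^bsub>M\<^esub> (x \<oplus>\<^bsub>M\<^esub> y) = a \<odot>\<^bsub>M\<^esub> x \<oplus>\<^bsub>M\<^esub> a \<odot>\<^bsub>M\<^esub> y"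
  using left_module by (simp add: left_module_def)

lemma smult_assoc1:
  "\<lbrakk>a \<in> carrier R; b \<in> carrier R; x \<in> carrier M\<rbrakk> \<Longrightarrow>
    (a \<otimes>\<^bsub>R\<^esub> b) \<odot>\<^bsub>M\<^esub> x = a \<odot>\<^bsub>M\<^esub> (b \<odot>\<^bsub>M\<^esub> x)"
  using left_module by (simp add: left_module_def)

lemma smult_one [simp]: "x \<in> carrier M \<Longrightarrow> \<one>\<^bsub>R\<^esub> \<odot>\<^bsub>M\<^esub> x = x"
  using left_module by (simp add: left_module_def)

lemma smult_r_null [simp]: "a \<in> carrier R \<Longrightarrow> a \<odot>\<^bsub>M\<^esub> \<zero>\<^bsub>M\<^esub> = \<zero>\<^bsub>M\<^esub>"
  using smult_r_distr[of a "\<zero>\<^bsub>M\<^esub>" "\<zero>\<^bsub>M\<^esub>"] by simp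

lemma submod_zero: "submod R M {\<zero>\<^bsub>M\<^esub>}"
  by (simp add: submod_def)

lemma submod_abelian_subgroup: "submod R M P \<Longrightarrow> abelian_subgroup P M"
  unfolding submod_def
  by (intro abelian_subgroupI3 additive_subgroupI M.abelian_group_axioms)
     (auto intro!: subgroup.intro simp: a_inv_def)

lemma gen_submod_eq_zero_iff: "gen_submod R M S = {\<zero>\<^bsub>M\<^esub>} \<longleftrightarrow> S \<subseteq> {\<zero>\<^bsub>M\<^esub>}"
proof
  show "S \<subseteq> {\<zero>\<^bsub>M\<^esub>}" if "gen_submod R M S = {\<zero>\<^bsub>M\<^esub>}"
    using that unfolding gen_submod_def by blast
next
  assume "S \<subseteq> {\<zero>\<^bsub>M\<^esub>}"
  then have "gen_submod R M S \<subseteq> {\<zero>\<^bsub>M\<^esub>}"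
    using submod_zero unfolding gen_submod_def by blast
  moreover have "\<zero>\<^bsub>M\<^esub> \<in> gen_submod R M S"
    unfolding gen_submod_def submod_def by blast
  ultimately show "gen_submod R M S = {\<zero>\<^bsub>M\<^esub>}" by blast
qed

lemma RM_not_zero:
  assumes "carrier M \<noteq> {\<zero>\<^bsub>M\<^esub>}"
  shows "\<not> RM R M \<subseteq> {\<zero>\<^bsub>M\<^esub>}"
proof -
  obtain m where "m \<in> carrier M" "m \<noteq> \<zero>\<^bsub>M\<^esub>"
    using assms M.zero_closed by blast
  moreover have "\<one>\<^bsub>R\<^esub> \<odot>\<^bsub>M\<^esub> m \<in> RM R M"
    unfolding RM_def using \<open>m \<in> carrier M\<close> R.one_closed by blast
  ultimately show ?thesis by auto
qed

lemma completely_semiprime_module_iff: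
  "completely_semiprime_module R M \<longleftrightarrow> carrier M \<noteq> {\<zero>\<^bsub>M\<^esub>} \<and>
     (\<forall>a \<in> carrier R. \<forall>m \<in> carrier M.
        (a \<otimes>\<^bsub>R\<^esub> a) \<odot>\<^bsub>M\<^esub> m = \<zero>\<^bsub>M\<^esub> \<longrightarrow> a \<odot>\<^bsub>M\<^esub> m = \<zero>\<^bsub>M\<^esub>)"
  unfolding completely_semiprime_module_def completely_semiprime_submod_def
  using submod_zero RM_not_zero by auto

lemma completely_prime_imp_semiprime:
  assumes "completely_prime_module R M"
  shows "completely_semiprime_module R M"
proof -
  have "carrier M \<noteq> {\<zero>\<^bsub>M\<^esub>}"
    using assms unfolding completely_prime_module_def completely_prime_submod_def RM_def
    by auto
  moreover have "a \<odot>\<^bsub>M\<^esub> m = \<zero>\<^bsub>M\<^esub>"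
    if "a \<in> carrier R" "m \<in> carrier M" "(a \<otimes>\<^bsub>R\<^esub> a) \<odot>\<^bsub>M\<^esub> m = \<zero>\<^bsub>M\<^esub>" for a m
    using assms that smult_assoc1[of a a m]
    unfolding completely_prime_module_def completely_prime_submod_def by auto
  ultimately show ?thesis
    unfolding completely_semiprime_module_iff by blast
qed

lemma completely_semiprime_pow_cancel:
  assumes "completely_semiprime_module R M" and "a \<in> carrier R" "m \<in> carrier M"
    and "(a [^]\<^bsub>R\<^esub> Suc k) \<odot>\<^bsub>M\<^esub> m = \<zero>\<^bsub>M\<^esub>"
  shows "a \<odot>\<^bsub>M\<^esub> m = \<zero>\<^bsub>M\<^esub>"
  using assms(4)
proof (induction k)
  case 0
  then show ?case using assms(2) by simp
next
  case (Suc k)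
  have ak: "a [^]\<^bsub>R\<^esub> k \<in> carrier R" using assms(2) by simp
  have "a [^]\<^bsub>R\<^esub> Suc (Suc k) = (a \<otimes>\<^bsub>R\<^esub> a) \<otimes>\<^bsub>R\<^esub> a [^]\<^bsub>R\<^esub> k"
    using assms(2) ak by (simp only: R.nat_pow_Suc2 R.m_assoc R.m_closed)
  then have "(a \<otimes>\<^bsub>R\<^esub> a) \<odot>\<^bsub>M\<^esub> ((a [^]\<^bsub>R\<^esub> k) \<odot>\<^bsub>M\<^esub> m) = \<zero>\<^bsub>M\<^esub>"
    using Suc.prems assms(2,3) ak by (simp only: smult_assoc1 R.m_closed)
  then have "a \<odot>\<^bsub>M\<^esub> ((a [^]\<^bsub>R\<^esub> k) \<odot>\<^bsub>M\<^esub> m) = \<zero>\<^bsub>M\<^esub>"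
    using assms(1-3) ak unfolding completely_semiprime_module_iff by blast
  then have "(a [^]\<^bsub>R\<^esub> Suc k) \<odot>\<^bsub>M\<^esub> m = \<zero>\<^bsub>M\<^esub>"
    using assms(2,3) ak by (simp only: R.nat_pow_Suc2 smult_assoc1)
  then show ?case by (rule Suc.IH)
qed

lemma completely_semiprime_iff_envelope_zero:
  assumes "carrier M \<noteq> {\<zero>\<^bsub>M\<^esub>}"
  shows "completely_semiprime_module R M \<longleftrightarrow> envelope R M {\<zero>\<^bsub>M\<^esub>} \<subseteq> {\<zero>\<^bsub>M\<^esub>}"
proof
  assume semiprime: "completely_semiprime_module R M"
  show "envelope R M {\<zero>\<^bsub>M\<^esub>} \<subseteq> {\<zero>\<^bsub>M\<^esub>}"
  proof
    fix z assume "z \<in> envelope R M {\<zero>\<^bsub>M\<^esub>}"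
    then obtain r m k where z: "z = r \<odot>\<^bsub>M\<^esub> m" "r \<in> carrier R" "m \<in> carrier M" "(k::nat) \<ge> 1"
      "(r [^]\<^bsub>R\<^esub> k) \<odot>\<^bsub>M\<^esub> m \<in> {\<zero>\<^bsub>M\<^esub>}"
      unfolding envelope_def by blast
    then obtain j where "k = Suc j" by (cases k) auto
    then show "z \<in> {\<zero>\<^bsub>M\<^esub>}"
      using completely_semiprime_pow_cancel[OF semiprime z(2,3)] z by simp
  qed
next
  assume envelope: "envelope R M {\<zero>\<^bsub>M\<^esub>} \<subseteq> {\<zero>\<^bsub>M\<^esub>}"
  have "a \<odot>\<^bsub>M\<^esub> m \<in> envelope R M {\<zero>\<^bsub>M\<^esub>}"
    if "a \<in> carrier R" "m \<in> carrier M" "(a \<otimes>\<^bsub>R\<^esub> a) \<odot>\<^bsub>M\<^esub> m = \<zero>\<^bsub>M\<^esub>" for a m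
  proof -
    have "(a [^]\<^bsub>R\<^esub> (2::nat)) \<odot>\<^bsub>M\<^esub> m = \<zero>\<^bsub>M\<^esub>"
      using that by (simp add: numeral_2_eq_2)
    then show ?thesis
      unfolding envelope_def using that by (intro CollectI exI conjI) (auto intro: exI[of _ 2])
  qed
  then show "completely_semiprime_module R M"
    unfolding completely_semiprime_module_iff using assms envelope by blast
qed

lemma beta_co_eq_gen_envelope:
  "complete_radical_formula R M \<Longrightarrow> beta_co R M = gen_submod R M (envelope R M {\<zero>\<^bsub>M\<^esub>})"
  using submod_zero
  unfolding complete_radical_formula_def complete_radical_formula_submod_def beta_co_def
  by simp

end

text \<open>The multiplicative part of the record is irrelevant for a module and filled with dummies.\<close>
definition quotient_module :: "('r, 'm, 'y) module_scheme \<Rightarrow> 'm set \<Rightarrow> ('r, 'm set) module" where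
  "quotient_module M P =
     \<lparr>carrier = a_rcosets\<^bsub>M\<^esub> P, monoid.mult = (\<lambda>X Y. X), one = P, zero = P,
      add = set_add M, smult = (\<lambda>a X. \<Union>x\<in>X. P +>\<^bsub>M\<^esub> (a \<odot>\<^bsub>M\<^esub> x))\<rparr>"

lemma quotient_module_simps [simp]:
  "carrier (quotient_module M P) = a_rcosets\<^bsub>M\<^esub> P"
  "zero (quotient_module M P) = P"
  "add (quotient_module M P) = set_add M"
  by (simp_all add: quotient_module_def)

lemma quotient_module_smult:
  "a \<odot>\<^bsub>quotient_module M P\<^esub> X = (\<Union>x\<in>X. P +>\<^bsub>M\<^esub> (a \<odot>\<^bsub>M\<^esub> x))"
  by (simp add: quotient_module_def)

lemma (in abelian_subgroup) a_rcos_eq_self_iff: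
  "x \<in> carrier G \<Longrightarrow> H +> x = H \<longleftrightarrow> x \<in> H"
  using a_rcos_self a_rcos_const by blast

lemma mem_a_rcosets_iff:
  "X \<in> a_rcosets\<^bsub>M\<^esub> P \<longleftrightarrow> (\<exists>x \<in> carrier M. X = P +>\<^bsub>M\<^esub> x)"
  unfolding A_RCOSETS_def' by blast

context lmodule
begin

lemma quotient_smult_rcos:
  assumes "submod R M P" and a: "a \<in> carrier R" and x: "x \<in> carrier M"
  shows "a \<odot>\<^bsub>quotient_module M P\<^esub> (P +>\<^bsub>M\<^esub> x) = P +>\<^bsub>M\<^esub> (a \<odot>\<^bsub>M\<^esub> x)"
proof -
  interpret P: abelian_subgroup P M
    using assms(1) by (rule submod_abelian_subgroup)
  have coset_indep: "P +>\<^bsub>M\<^esub> (a \<odot>\<^bsub>M\<^esub> y) = P +>\<^bsub>M\<^esub> (a \<odot>\<^bsub>M\<^esub> x)" if y: "y \<in> P +>\<^bsub>M\<^esub> x" for y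
  proof -
    obtain h where h: "h \<in> P" "y = h \<oplus>\<^bsub>M\<^esub> x"
      using y unfolding a_r_coset_def' by blast
    then have "a \<odot>\<^bsub>M\<^esub> y = a \<odot>\<^bsub>M\<^esub> h \<oplus>\<^bsub>M\<^esub> a \<odot>\<^bsub>M\<^esub> x"
      using a x by (simp add: smult_r_distr)
    moreover have "a \<odot>\<^bsub>M\<^esub> h \<in> P"
      using assms(1) a h(1) unfolding submod_def by blast
    ultimately have "a \<odot>\<^bsub>M\<^esub> y \<in> P +>\<^bsub>M\<^esub> (a \<odot>\<^bsub>M\<^esub> x)"
      unfolding a_r_coset_def' by blast
    then show ?thesis
      using a x by (simp add: P.a_repr_independence')
  qed
  have "x \<in> P +>\<^bsub>M\<^esub> x"
    using x by (rule P.a_rcos_self)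
  with coset_indep have "(\<Union>y \<in> P +>\<^bsub>M\<^esub> x. P +>\<^bsub>M\<^esub> (a \<odot>\<^bsub>M\<^esub> y)) = P +>\<^bsub>M\<^esub> (a \<odot>\<^bsub>M\<^esub> x)"
    by blast
  then show ?thesis
    by (simp only: quotient_module_smult)
qed

lemma quotient_abelian_group:
  assumes "submod R M P"
  shows "abelian_group (quotient_module M P)"
proof -
  interpret P: abelian_subgroup P M
    using assms by (rule submod_abelian_subgroup)
  show ?thesis
  proof (rule abelian_groupI, simp_all only: quotient_module_simps)
    fix X Y assume "X \<in> a_rcosets\<^bsub>M\<^esub> P" "Y \<in> a_rcosets\<^bsub>M\<^esub> P"
    then show "X <+>\<^bsub>M\<^esub> Y \<in> a_rcosets\<^bsub>M\<^esub> P" by (rule P.a_setmult_closed)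
  next
    show "P \<in> a_rcosets\<^bsub>M\<^esub> P" by (rule P.a_subgroup_in_rcosets)
  next
    fix X Y Z assume "X \<in> a_rcosets\<^bsub>M\<^esub> P" "Y \<in> a_rcosets\<^bsub>M\<^esub> P" "Z \<in> a_rcosets\<^bsub>M\<^esub> P"
    then show "X <+>\<^bsub>M\<^esub> Y <+>\<^bsub>M\<^esub> Z = X <+>\<^bsub>M\<^esub> (Y <+>\<^bsub>M\<^esub> Z)" by (rule P.a_rcosets_assoc)
  next
    fix X Y assume "X \<in> a_rcosets\<^bsub>M\<^esub> P" "Y \<in> a_rcosets\<^bsub>M\<^esub> P"
    then obtain x y where "x \<in> carrier M" "y \<in> carrier M" "X = P +>\<^bsub>M\<^esub> x" "Y = P +>\<^bsub>M\<^esub> y"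
      unfolding mem_a_rcosets_iff by blast
    then show "X <+>\<^bsub>M\<^esub> Y = Y <+>\<^bsub>M\<^esub> X" by (simp add: P.a_rcos_sum M.a_comm)
  next
    fix X assume "X \<in> a_rcosets\<^bsub>M\<^esub> P"
    then show "P <+>\<^bsub>M\<^esub> X = X" by (rule P.rcosets_add_eq)
  next
    fix X assume X: "X \<in> a_rcosets\<^bsub>M\<^esub> P"
    show "\<exists>Y \<in> a_rcosets\<^bsub>M\<^esub> P. Y <+>\<^bsub>M\<^esub> X = P"
      using P.a_setinv_closed[OF X] P.a_rcosets_inv_mult_group_eq[OF X] by blast
  qed
qed

lemma left_module_quotient:
  assumes P: "submod R M P"
  shows "left_module R (quotient_module M P)"
proof -
  interpret P: abelian_subgroup P M
    using P by (rule submod_abelian_subgroup)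
  let ?Q = "quotient_module M P"
  note sm = quotient_smult_rcos[OF P]
  have ad: "(P +>\<^bsub>M\<^esub> x) <+>\<^bsub>M\<^esub> (P +>\<^bsub>M\<^esub> y) = P +>\<^bsub>M\<^esub> (x \<oplus>\<^bsub>M\<^esub> y)"
    if "x \<in> carrier M" "y \<in> carrier M" for x y
    using P.a_rcos_sum[OF that] .
  have rep: "\<exists>x \<in> carrier M. X = P +>\<^bsub>M\<^esub> x" if "X \<in> carrier ?Q" for X
    using that by (simp add: mem_a_rcosets_iff)
  show ?thesis
    unfolding left_module_def
  proof (intro conjI ballI)
    show "ring R" by (rule R.ring_axioms)
    show "abelian_group ?Q" using P by (rule quotient_abelian_group)
  next
    fix a X assume a: "a \<in> carrier R" and "X \<in> carrier ?Q"
    then obtain x where x: "x \<in> carrier M" "X = P +>\<^bsub>M\<^esub> x" using rep by blast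
    show "a \<odot>\<^bsub>?Q\<^esub> X \<in> carrier ?Q"
      using a x by (auto simp: sm mem_a_rcosets_iff)
  next
    fix X assume "X \<in> carrier ?Q"
    then obtain x where x: "x \<in> carrier M" "X = P +>\<^bsub>M\<^esub> x" using rep by blast
    show "\<one>\<^bsub>R\<^esub> \<odot>\<^bsub>?Q\<^esub> X = X"
      using x by (simp add: sm)
  next
    fix a b X assume ab: "a \<in> carrier R" "b \<in> carrier R" and "X \<in> carrier ?Q"
    then obtain x where x: "x \<in> carrier M" "X = P +>\<^bsub>M\<^esub> x" using rep by blast
    show "(a \<oplus>\<^bsub>R\<^esub> b) \<odot>\<^bsub>?Q\<^esub> X = a \<odot>\<^bsub>?Q\<^esub> X \<oplus>\<^bsub>?Q\<^esub> b \<odot>\<^bsub>?Q\<^esub> X"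
      using ab x by (simp add: sm ad smult_l_distr)
    show "(a \<otimes>\<^bsub>R\<^esub> b) \<odot>\<^bsub>?Q\<^esub> X = a \<odot>\<^bsub>?Q\<^esub> (b \<odot>\<^bsub>?Q\<^esub> X)"
      using ab x by (simp add: sm smult_assoc1)
  next
    fix a X Y assume a: "a \<in> carrier R" and "X \<in> carrier ?Q" "Y \<in> carrier ?Q"
    then obtain x y where "x \<in> carrier M" "X = P +>\<^bsub>M\<^esub> x" "y \<in> carrier M" "Y = P +>\<^bsub>M\<^esub> y"
      using rep by meson
    then show "a \<odot>\<^bsub>?Q\<^esub> (X \<oplus>\<^bsub>?Q\<^esub> Y) = a \<odot>\<^bsub>?Q\<^esub> X \<oplus>\<^bsub>?Q\<^esub> a \<odot>\<^bsub>?Q\<^esub> Y"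
      using a by (simp add: sm ad smult_r_distr)
  qed
qed

lemma completely_prime_module_quotient:
  assumes cp: "completely_prime_submod R M P"
  shows "completely_prime_module R (quotient_module M P)"
proof -
  let ?Q = "quotient_module M P"
  have P: "submod R M P"
    using cp unfolding completely_prime_submod_def by blast
  interpret P: abelian_subgroup P M
    using P by (rule submod_abelian_subgroup)
  interpret Q: lmodule R ?Q
    using P by unfold_locales (rule left_module_quotient)
  have rep: "\<exists>x \<in> carrier M. X = P +>\<^bsub>M\<^esub> x" if "X \<in> carrier ?Q" for X
    using that by (simp add: mem_a_rcosets_iff)
  have smult_eq_zero_iff: "r \<odot>\<^bsub>?Q\<^esub> (P +>\<^bsub>M\<^esub> m) = P \<longleftrightarrow> r \<odot>\<^bsub>M\<^esub> m \<in> P"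
    if "r \<in> carrier R" "m \<in> carrier M" for r m
    using that by (simp add: quotient_smult_rcos[OF P] P.a_rcos_eq_self_iff)
  have "\<not> RM R ?Q \<subseteq> {P}"
  proof
    assume RM_zero: "RM R ?Q \<subseteq> {P}"
    obtain r m where rm: "r \<in> carrier R" "m \<in> carrier M" "r \<odot>\<^bsub>M\<^esub> m \<notin> P"
      using cp unfolding completely_prime_submod_def RM_def by blast
    then have "r \<odot>\<^bsub>?Q\<^esub> (P +>\<^bsub>M\<^esub> m) \<in> RM R ?Q"
      unfolding RM_def by (auto simp: mem_a_rcosets_iff)
    then show False
      using RM_zero rm smult_eq_zero_iff by blast
  qed
  moreover have "X = P \<or> (\<forall>X' \<in> carrier ?Q. r \<odot>\<^bsub>?Q\<^esub> X' = P)"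
    if r: "r \<in> carrier R" and X: "X \<in> carrier ?Q" and rX: "r \<odot>\<^bsub>?Q\<^esub> X = P" for r X
  proof -
    obtain m where m: "m \<in> carrier M" "X = P +>\<^bsub>M\<^esub> m"
      using rep[OF X] by blast
    then have "r \<odot>\<^bsub>M\<^esub> m \<in> P"
      using rX r smult_eq_zero_iff by blast
    then have "m \<in> P \<or> (\<forall>m' \<in> carrier M. r \<odot>\<^bsub>M\<^esub> m' \<in> P)"
      using cp r m(1) unfolding completely_prime_submod_def by blast
    then show ?thesis
      using m r rep smult_eq_zero_iff P.a_rcos_eq_self_iff by metis
  qed
  ultimately show ?thesis
    unfolding completely_prime_module_def completely_prime_submod_def
    using Q.submod_zero by auto
qed

end

lemma prod_module_simps [simp]:
  "carrier (prod_module I S) = (\<Pi>\<^sub>E i\<in>I. carrier (S i))"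
  "add (prod_module I S) = (\<lambda>f g. \<lambda>i\<in>I. f i \<oplus>\<^bsub>S i\<^esub> g i)"
  "smult (prod_module I S) = (\<lambda>a f. \<lambda>i\<in>I. a \<odot>\<^bsub>S i\<^esub> f i)"
  by (simp_all add: prod_module_def)

lemma module_hom_prod_component:
  assumes "\<sigma> \<in> module_hom R M (prod_module I S)" and "i \<in> I"
  shows "(\<lambda>m. \<sigma> m i) \<in> module_hom R M (S i)"
  using assms unfolding module_hom_def by (auto simp: PiE_iff)

lemma module_hom_zero:
  assumes "h \<in> module_hom R M N" and "abelian_group M" "abelian_group N"
  shows "h \<zero>\<^bsub>M\<^esub> = \<zero>\<^bsub>N\<^esub>"
proof -
  interpret M: abelian_group M by fact
  interpret N: abelian_group N by fact
  have h0: "h \<zero>\<^bsub>M\<^esub> \<in> carrier N"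
    using assms(1) unfolding module_hom_def by blast
  have "h (\<zero>\<^bsub>M\<^esub> \<oplus>\<^bsub>M\<^esub> \<zero>\<^bsub>M\<^esub>) = h \<zero>\<^bsub>M\<^esub> \<oplus>\<^bsub>N\<^esub> h \<zero>\<^bsub>M\<^esub>"
    using assms(1) M.zero_closed unfolding module_hom_def by blast
  then show ?thesis
    using h0 by simp
qed

lemma module_hom_smult:
  "\<lbrakk>h \<in> module_hom R M N; a \<in> carrier R; x \<in> carrier M\<rbrakk> \<Longrightarrow> h (a \<odot>\<^bsub>M\<^esub> x) = a \<odot>\<^bsub>N\<^esub> h x"
  unfolding module_hom_def by blast

context lmodule
begin

lemma completely_semiprime_of_subdirect_product:
  assumes "carrier M \<noteq> {\<zero>\<^bsub>M\<^esub>}" and "subdirect_product_of_completely_prime R M I S"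
  shows "completely_semiprime_module R M"
proof -
  obtain \<sigma> where hom: "\<sigma> \<in> module_hom R M (prod_module I S)" and inj: "inj_on \<sigma> (carrier M)"
    and S: "\<And>i. i \<in> I \<Longrightarrow> left_module R (S i) \<and> completely_prime_module R (S i)"
    using assms(2) unfolding subdirect_product_of_completely_prime_def by blast
  have \<sigma>_carrier: "\<sigma> x \<in> (\<Pi>\<^sub>E i\<in>I. carrier (S i))" if "x \<in> carrier M" for x
    using hom that unfolding module_hom_def by auto
  have "a \<odot>\<^bsub>M\<^esub> m = \<zero>\<^bsub>M\<^esub>"
    if a: "a \<in> carrier R" and m: "m \<in> carrier M" and aam: "(a \<otimes>\<^bsub>R\<^esub> a) \<odot>\<^bsub>M\<^esub> m = \<zero>\<^bsub>M\<^esub>" for a m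
  proof -
    have componentwise: "\<sigma> (a \<odot>\<^bsub>M\<^esub> m) i = \<sigma> \<zero>\<^bsub>M\<^esub> i" if i: "i \<in> I" for i
    proof -
      interpret Si: lmodule R "S i"
        using S[OF i] by unfold_locales blast
      let ?h = "\<lambda>m. \<sigma> m i"
      have h: "?h \<in> module_hom R M (S i)"
        using hom i by (rule module_hom_prod_component)
      have h0: "?h \<zero>\<^bsub>M\<^esub> = \<zero>\<^bsub>S i\<^esub>"
        using h M.abelian_group_axioms Si.M.abelian_group_axioms by (rule module_hom_zero)
      have hm: "?h m \<in> carrier (S i)"
        using h m unfolding module_hom_def by blast
      have "(a \<otimes>\<^bsub>R\<^esub> a) \<odot>\<^bsub>S i\<^esub> ?h m = \<zero>\<^bsub>S i\<^esub>"
        using module_hom_smult[OF h _ m, of "a \<otimes>\<^bsub>R\<^esub> a"] a aam h0 by simp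
      then have "a \<odot>\<^bsub>S i\<^esub> ?h m = \<zero>\<^bsub>S i\<^esub>"
        using Si.completely_prime_imp_semiprime S[OF i] a hm
        unfolding Si.completely_semiprime_module_iff by blast
      then show ?thesis
        using module_hom_smult[OF h a m] h0 by simp
    qed
    have "\<sigma> (a \<odot>\<^bsub>M\<^esub> m) = \<sigma> \<zero>\<^bsub>M\<^esub>"
      using \<sigma>_carrier[OF smult_closed[OF a m]] \<sigma>_carrier[OF M.zero_closed] componentwise
      by (rule PiE_ext)
    then show ?thesis
      using inj a m unfolding inj_on_def by simp
  qed
  then show ?thesis
    unfolding completely_semiprime_module_iff using assms(1) by blast
qed

lemma subdirect_product_of_beta_co_zero:
  assumes nontrivial: "carrier M \<noteq> {\<zero>\<^bsub>M\<^esub>}" and beta: "beta_co R M = {\<zero>\<^bsub>M\<^esub>}"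
  shows "subdirect_product_of_completely_prime R M
           {P. completely_prime_submod R M P} (quotient_module M)"
proof -
  let ?I = "{P. completely_prime_submod R M P}"
  have submod: "submod R M P" if "P \<in> ?I" for P
    using that unfolding completely_prime_submod_def by blast
  have "{P. completely_prime_submod R M P \<and> {\<zero>\<^bsub>M\<^esub>} \<subseteq> P} = ?I"
    using submod unfolding submod_def by blast
  then have Inter: "\<Inter>?I = {\<zero>\<^bsub>M\<^esub>}"
    using beta nontrivial unfolding beta_co_def beta_s_co_def by (simp split: if_splits)
  define \<sigma> where "\<sigma> m = (\<lambda>P\<in>?I. P +>\<^bsub>M\<^esub> m)" for m
  have rcos_sum: "(P +>\<^bsub>M\<^esub> x) <+>\<^bsub>M\<^esub> (P +>\<^bsub>M\<^esub> y) = P +>\<^bsub>M\<^esub> (x \<oplus>\<^bsub>M\<^esub> y)"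
    if "P \<in> ?I" "x \<in> carrier M" "y \<in> carrier M" for P x y
    using submod_abelian_subgroup[OF submod[OF that(1)]] that(2,3) by (rule abelian_subgroup.a_rcos_sum)
  have hom: "\<sigma> \<in> module_hom R M (prod_module ?I (quotient_module M))"
    unfolding module_hom_def
  proof (intro CollectI conjI ballI funcsetI)
    fix x assume "x \<in> carrier M"
    then show "\<sigma> x \<in> carrier (prod_module ?I (quotient_module M))"
      by (auto simp: \<sigma>_def mem_a_rcosets_iff)
  next
    fix x y assume "x \<in> carrier M" "y \<in> carrier M"
    then show "\<sigma> (x \<oplus>\<^bsub>M\<^esub> y) = \<sigma> x \<oplus>\<^bsub>prod_module ?I (quotient_module M)\<^esub> \<sigma> y"
      unfolding \<sigma>_def prod_module_simps quotient_module_simps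
      by (intro restrict_ext) (simp add: rcos_sum)
  next
    fix a x assume "a \<in> carrier R" "x \<in> carrier M"
    then show "\<sigma> (a \<odot>\<^bsub>M\<^esub> x) = a \<odot>\<^bsub>prod_module ?I (quotient_module M)\<^esub> \<sigma> x"
      unfolding \<sigma>_def prod_module_simps
      by (intro restrict_ext) (simp add: quotient_smult_rcos submod)
  qed
  have "inj_on \<sigma> (carrier M)"
  proof (rule inj_onI)
    fix x y assume x: "x \<in> carrier M" and y: "y \<in> carrier M" and "\<sigma> x = \<sigma> y"
    then have "P +>\<^bsub>M\<^esub> x = P +>\<^bsub>M\<^esub> y" if "P \<in> ?I" for P
      using that unfolding \<sigma>_def by (metis restrict_apply')
    then have "x \<oplus>\<^bsub>M\<^esub> \<ominus>\<^bsub>M\<^esub> y \<in> P" if "P \<in> ?I" for P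
      using abelian_subgroup.a_rcos_module_imp[OF submod_abelian_subgroup[OF submod[OF that]] y]
        abelian_subgroup.a_rcos_self[OF submod_abelian_subgroup[OF submod[OF that]] x] that
      by metis
    then have "x \<oplus>\<^bsub>M\<^esub> \<ominus>\<^bsub>M\<^esub> y = \<zero>\<^bsub>M\<^esub>"
      using Inter by blast
    then show "x = y"
      using x y by (metis M.add.inv_solve_right' M.l_zero M.a_inv_closed M.zero_closed)
  qed
  moreover have "(\<lambda>m. \<sigma> m P) ` carrier M = carrier (quotient_module M P)" if "P \<in> ?I" for P
    using that by (auto simp: \<sigma>_def mem_a_rcosets_iff)
  ultimately show ?thesis
    unfolding subdirect_product_of_completely_prime_def
    using left_module_quotient completely_prime_module_quotient submod hom by blast
qed

end

theorem theorem5p2: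
  fixes R :: "'r ring" and M :: "('r, 'm) module"
  assumes "left_module R M"
    and "carrier M \<noteq> {\<zero>\<^bsub>M\<^esub>}"
    and "complete_radical_formula R M"
  shows "(completely_semiprime_module R M \<longleftrightarrow>
            gen_submod R M (envelope R M {\<zero>\<^bsub>M\<^esub>}) = {\<zero>\<^bsub>M\<^esub>})
       \<and> (gen_submod R M (envelope R M {\<zero>\<^bsub>M\<^esub>}) = {\<zero>\<^bsub>M\<^esub>} \<longleftrightarrow>
            beta_co R M = {\<zero>\<^bsub>M\<^esub>})
       \<and> (completely_semiprime_module R M \<longleftrightarrow>
            (\<exists>(I :: 'm set set) (S :: 'm set \<Rightarrow> ('r, 'm set) module).
               subdirect_product_of_completely_prime R M I S))
       \<and> (\<forall>(I :: 'i set) (S :: 'i \<Rightarrow> ('r, 's) module).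
            subdirect_product_of_completely_prime R M I S \<longrightarrow> completely_semiprime_module R M)"
proof (intro conjI allI impI)
  have M: "lmodule R M"
    using assms(1) by unfold_locales
  show semiprime_iff_gen:
    "completely_semiprime_module R M \<longleftrightarrow> gen_submod R M (envelope R M {\<zero>\<^bsub>M\<^esub>}) = {\<zero>\<^bsub>M\<^esub>}"
    using lmodule.completely_semiprime_iff_envelope_zero[OF M assms(2)]
      lmodule.gen_submod_eq_zero_iff[OF M] by simp
  show gen_iff_beta:
    "gen_submod R M (envelope R M {\<zero>\<^bsub>M\<^esub>}) = {\<zero>\<^bsub>M\<^esub>} \<longleftrightarrow> beta_co R M = {\<zero>\<^bsub>M\<^esub>}"
    using lmodule.beta_co_eq_gen_envelope[OF M assms(3)] by simp
  show "completely_semiprime_module R M \<longleftrightarrow>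
      (\<exists>(I :: 'm set set) (S :: 'm set \<Rightarrow> ('r, 'm set) module).
         subdirect_product_of_completely_prime R M I S)"
    using lmodule.subdirect_product_of_beta_co_zero[OF M assms(2)]
      lmodule.completely_semiprime_of_subdirect_product[OF M assms(2)]
      semiprime_iff_gen gen_iff_beta by blast
  fix I :: "'i set" and S :: "'i \<Rightarrow> ('r, 's) module"
  assume "subdirect_product_of_completely_prime R M I S"
  then show "completely_semiprime_module R M"
    by (rule lmodule.completely_semiprime_of_subdirect_product[OF M assms(2)])
qed

end
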